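(* Let $\mathcal{X}$ be an input space, $\mathcal{Z}=\mathbb{R}^d$ a latent space equipped with a metric, and $f:\mathcal{X}\to\{0,1\}$ a (domain-invariant) labeling function. Let $p_S$ and $p_T$ be source and target distributions on $\mathcal{X}$. Let $g:\mathcal{X}\to\mathcal{Z}$ be continuous and let $\mathcal{H}$ be a class of functions $h:\mathcal{Z}\to[0,1]$, each $K$-Lipschitz. For $U\in\{S,T\}$ let $p_U^g$ be the push-forward of $p_U$ by $g$, and assume the class-conditional decomposition $p_U^g=\sum_{k} p_U(y=k)\,p_U(\cdot\mid y=k)$ where the label distributions and class-conditional densities satisfy the hypotheses: $p_S(y=k)>0$, the densities $p_S(\cdot\mid y=k),p_T(\cdot\mid y=k)$ are continuous and $p_S(z\mid y=k)>0$ for all $z,k$. Let $g_U(\cdot\mid z)$ be conditional distributions with $p_U(x)=\int g_U(x\mid z)\,p_U^g(z)\,dz$, and define $f_U^g(z)=\int f(x)\,g_U(x\mid z)\,dx$. Define the risks $$\varepsilon_U(h\circ g,f)=\mathbb{E}_{x\sim p_U}\big[|h(g(x))-f(x)|\big],\qquad \varepsilon_U^z(h,h')=\mathbb{E}_{z\sim p_U^g}\big[|h(z)-h'(z)|\big],$$ so that $\varepsilon_U(h\circ g,f)=\varepsilon_U^z(h,f_U^g)$. Let $h^\star\in\arg\min_{h\in\mathcal{H}}\varepsilon_S(h\circ g,f)$ (assumed to exist), let $S_k(z)=p_T(z\mid y=k)/p_S(z\mid y=k)$ and $w_k=p_T(y=k)/p_S(y=k)$, and let $$WD_1(p_S^g,p_T^g)=\sup_{\|v\|_L\le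 1}\ \mathbb{E}_{z\sim p_S^g}[v(z)]-\mathbb{E}_{z\sim p_T^g}[v(z)]$$ be the Wasserstein-1 distance (supremum over 1-Lipschitz functions $v:\mathcal{Z}\to\mathbb{R}$). Then for every $h\in\mathcal{H}$, $$\varepsilon_T(h\circ g,f)\le \varepsilon_S(h\circ g,f)+2K\cdot WD_1(p_S^g,p_T^g)+\Big[1+\sup_{k,z} w_k S_k(z)\Big]\varepsilon_S(h^\star\circ g,f)+\varepsilon_T^z(f_S^g,f_T^g),$$ where $\varepsilon_T^z(f_S^g,f_T^g)=\mathbb{E}_{z\sim p_T^g}\big[|f_T^g(z)-f_S^g(z)|\big]$.
   Context: Binary classification setting with labels in $\{0,1\}$ (classes $k\in\{0,1\}$). $p_U(y=k)$ is the label proportion of class $k$ in domain $U$, and $p_U(\cdot\mid y=k)$ the class-conditional density in the latent space $\mathcal{Z}$. The push-forward is $p_U^g(A)=p_U(g^{-1}(A))$ for measurable $A\subset\mathcal{Z}$. *)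

theory Defs
  imports "HOL-Probability.Probability"
begin

text \<open>With P = p_U this is eps_U(h o g, f) (taking
  h := h o g, h' := f); with P = push-forward of p_U by g it is eps_U^z(h, h').\<close>
definition risk :: "'a measure \<Rightarrow> ('a \<Rightarrow> real) \<Rightarrow> ('a \<Rightarrow> real) \<Rightarrow> real" where
  "risk P h h' = (\<integral>x. \<bar>h x - h' x\<bar> \<partial>P)"

definition WD1 :: "'a::metric_space measure \<Rightarrow> 'a measure \<Rightarrow> ereal" where
  "WD1 P Q = (SUP v \<in> {v. 1-lipschitz_on UNIV v \<and> integrable P v \<and> integrable Q v}.
                 ereal ((\<integral>z. v z \<partial>P) - (\<integral>z. v z \<partial>Q)))"

end

theory Submission
  imports Defs
begin

text \<open>Since f is binary, the risk of h \<circ> g under p_U is the integral over the latent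
  distribution of the soft disagreement between h and the conditional label f_U^g. Pointwise, this
  disagreement obeys a triangle inequality through h* and f_S^g, with error terms |h - h*| and
  |f_T^g - f_S^g|. The target integral of |h - h*|, a 2K-Lipschitz function, moves to the source at
  the price of 2K WD_1 by Kantorovich--Rubinstein duality and is then bounded by the two source
  risks; the target integral of the disagreement of h* moves to the source through the pointwise
  density bound p_T^g \<le> (sup w_k S_k) p_S^g.\<close>

text \<open>The probability that independent Bernoulli(a) and Bernoulli(b) labels differ; for a hard
  label b it is |a - b|.\<close>
definition disagreement :: "real \<Rightarrow> real \<Rightarrow> real" where
  "disagreement a b = a + b - 2 * a * b"

lemma disagreement_binary: "a \<in> {0..1} \<Longrightarrow> b \<in> {0, 1} \<Longrightarrow> disagreement a b = \<bar>a - b\<bar>"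
  by (auto simp: disagreement_def)

lemma disagreement_unit_interval:
  assumes "a \<in> {0..1}" "b \<in> {0..1}"
  shows "disagreement a b \<in> {0..1}"
proof -
  have "0 \<le> a * (1 - b) + b * (1 - a)" "0 \<le> (1 - a) * (1 - b) + a * b"
    using assms by auto
  then show ?thesis by (simp add: disagreement_def algebra_simps)
qed

lemma abs_diff_le_disagreement:
  assumes "a \<in> {0..1}" "b \<in> {0..1}"
  shows "\<bar>a - b\<bar> \<le> disagreement a b"
proof -
  have "0 \<le> a * (1 - b)" "0 \<le> b * (1 - a)" using assms by auto
  then show ?thesis by (simp add: disagreement_def abs_le_iff algebra_simps)
qed

lemma disagreement_triangle:
  assumes "a \<in> {0..1}" "b' \<in> {0..1}"
  shows "disagreement a b \<le> \<bar>a - a'\<bar> + disagreement a' b' + \<bar>b - b'\<bar>"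
proof -
  have "disagreement a b - disagreement a' b' = (a - a') * (1 - 2 * b') + (b - b') * (1 - 2 * a)"
    by (simp add: disagreement_def algebra_simps)
  moreover have "\<bar>(a - a') * (1 - 2 * b')\<bar> \<le> \<bar>a - a'\<bar>" "\<bar>(b - b') * (1 - 2 * a)\<bar> \<le> \<bar>b - b'\<bar>"
    using assms by (auto simp: abs_mult intro!: mult_left_le)
  ultimately show ?thesis by linarith
qed

lemma measurable_disagreement [measurable]:
  "f \<in> borel_measurable M \<Longrightarrow> g \<in> borel_measurable M \<Longrightarrow> (\<lambda>x. disagreement (f x) (g x)) \<in> borel_measurable M"
  unfolding disagreement_def by simp

lemma integral_disagreement:
  assumes "prob_space M" "integrable M f"
  shows "(\<integral>x. disagreement a (f x) \<partial>M) = disagreement a (\<integral>x. f x \<partial>M)"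
proof -
  interpret prob_space M by fact
  have "(\<integral>x. a + f x - 2 * a * f x \<partial>M) = (\<integral>x. a + f x \<partial>M) - (\<integral>x. 2 * a * f x \<partial>M)"
    using assms(2) by (intro Bochner_Integration.integral_diff) auto
  then show ?thesis using assms(2) by (simp add: disagreement_def prob_space)
qed

lemma lipschitz_on_abs_diff:
  fixes f g :: "'a::metric_space \<Rightarrow> real"
  assumes "C-lipschitz_on U f" "D-lipschitz_on U g"
  shows "(C + D)-lipschitz_on U (\<lambda>x. \<bar>f x - g x\<bar>)"
  using lipschitz_on_diff[OF assms]
  unfolding lipschitz_on_def dist_real_def by (meson abs_triangle_ineq3 order_trans)

lemma integrable_unit_interval:
  fixes f :: "'a \<Rightarrow> real"
  assumes "finite_measure M" "f \<in> borel_measurable M" "\<And>x. f x \<in> {0..1}"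
  shows "integrable M f"
proof -
  interpret finite_measure M by fact
  show ?thesis
    by (rule integrable_const_bound[where B=1]) (use assms(2,3) in \<open>auto intro!: AE_I2\<close>)
qed

lemma integral_unit_interval:
  fixes f :: "'a \<Rightarrow> real"
  assumes "prob_space M" "f \<in> borel_measurable M" "\<And>x. f x \<in> {0..1}"
  shows "(\<integral>x. f x \<partial>M) \<in> {0..1}"
proof -
  interpret prob_space M by fact
  have "integrable M f" using assms by (intro integrable_unit_interval) auto
  then show ?thesis
    using integral_ge_const[of f 0] integral_le_const[of f 1] assms(3) by (auto intro: AE_I2)
qed

lemma integrable_borel_unit_interval:
  fixes F :: "'a::topological_space \<Rightarrow> real"
  assumes "prob_space M" "sets M = sets borel" "F \<in> borel_measurable borel" "\<And>z. F z \<in> {0..1}"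
  shows "integrable M F"
  using assms by (intro integrable_unit_interval prob_space.finite_measure)
    (simp_all add: measurable_cong_sets[OF assms(2) refl])

lemma integral_abs_diff_binary:
  fixes f :: "'a \<Rightarrow> real"
  assumes "prob_space M" "f \<in> borel_measurable M" "\<And>x. f x \<in> {0, 1}" "a \<in> {0..1}"
  shows "(\<integral>x. \<bar>a - f x\<bar> \<partial>M) = disagreement a (\<integral>x. f x \<partial>M)"
proof -
  have f_unit: "f x \<in> {0..1}" for x using assms(3)[of x] by auto
  have "(\<integral>x. \<bar>a - f x\<bar> \<partial>M) = (\<integral>x. disagreement a (f x) \<partial>M)"
    using assms(3,4) by (simp add: disagreement_binary)
  also have "\<dots> = disagreement a (\<integral>x. f x \<partial>M)"
    using assms(1,2) f_unit
    by (intro integral_disagreement integrable_unit_interval prob_space.finite_measure)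
  finally show ?thesis .
qed

lemma sum_le_ereal_mult_sum:
  fixes a b :: "'i \<Rightarrow> real" and M :: ereal
  assumes "finite I" "\<And>k. k \<in> I \<Longrightarrow> b k > 0" "\<And>k. k \<in> I \<Longrightarrow> ereal (a k / b k) \<le> M"
  shows "ereal (\<Sum>k\<in>I. a k) \<le> M * ereal (\<Sum>k\<in>I. b k)"
proof (cases "I = {}")
  case False
  then obtain k where "k \<in> I" by blast
  show ?thesis
  proof (cases M)
    case (real m)
    have "a k \<le> m * b k" if "k \<in> I" for k
      using assms(2,3)[OF that] real by (simp add: pos_divide_le_eq)
    then have "(\<Sum>k\<in>I. a k) \<le> m * (\<Sum>k\<in>I. b k)"
      by (simp add: sum_distrib_left sum_mono)
    then show ?thesis using real by simp
  next
    case PInf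
    have "(\<Sum>k\<in>I. b k) > 0" using assms(1,2) False by (intro sum_pos) auto
    then show ?thesis using PInf by simp
  qed (use assms(3)[OF \<open>k \<in> I\<close>] in simp)
qed (simp add: zero_ereal_def[symmetric])

lemma mixture_le_SUP_ratio_mult:
  fixes w v :: "'i \<Rightarrow> real" and p q :: "'i \<Rightarrow> 'z \<Rightarrow> real"
  assumes "finite I" "\<And>k. k \<in> I \<Longrightarrow> v k > 0" "\<And>k z. k \<in> I \<Longrightarrow> q k z > 0"
  shows "ereal (\<Sum>k\<in>I. w k * p k z)
    \<le> (SUP kz \<in> I \<times> UNIV. ereal ((w (fst kz) / v (fst kz)) * (p (fst kz) (snd kz) / q (fst kz) (snd kz))))
       * ereal (\<Sum>k\<in>I. v k * q k z)"
proof (rule sum_le_ereal_mult_sum)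
  fix k assume k: "k \<in> I"
  then show "v k * q k z > 0" using assms(2,3) by simp
  have "ereal ((w (fst (k, z)) / v (fst (k, z))) * (p (fst (k, z)) (snd (k, z)) / q (fst (k, z)) (snd (k, z))))
      \<le> (SUP kz \<in> I \<times> UNIV. ereal ((w (fst kz) / v (fst kz)) * (p (fst kz) (snd kz) / q (fst kz) (snd kz))))"
    using k by (intro SUP_upper) auto
  then show "ereal (w k * p k z / (v k * q k z))
      \<le> (SUP kz \<in> I \<times> UNIV. ereal ((w (fst kz) / v (fst kz)) * (p (fst kz) (snd kz) / q (fst kz) (snd kz))))"
    by simp
qed (rule assms(1))

lemma lipschitz_integral_le_WD1:
  fixes P Q :: "'z::metric_space measure" and u :: "'z \<Rightarrow> real"
  assumes "prob_space P" "prob_space Q" "L-lipschitz_on UNIV u"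
    and "integrable P u" "integrable Q u"
  shows "ereal (\<integral>z. u z \<partial>Q) \<le> ereal (\<integral>z. u z \<partial>P) + ereal L * WD1 P Q"
proof (cases "L = 0")
  case True
  define c where "c = u undefined"
  have "u z = c" for z using assms(3) True by (simp add: lipschitz_on_def c_def)
  then have "(\<integral>z. u z \<partial>M) = c" if "prob_space M" for M
    using prob_space.prob_space[OF that] by simp
  then show ?thesis
    using True assms(1,2) by (simp add: zero_ereal_def[symmetric])
next
  case False
  then have L: "L > 0" using lipschitz_on_nonneg[OF assms(3)] by simp
  define v where "v = (\<lambda>z. - u z / L)"
  have "1-lipschitz_on UNIV v"
    using lipschitz_on_cmult_real[OF assms(3), of "- 1 / L"] L by (simp add: v_def)
  moreover have "integrable P v" "integrable Q v" using assms(4,5) by (simp_all add: v_def)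
  ultimately have "ereal ((\<integral>z. v z \<partial>P) - (\<integral>z. v z \<partial>Q)) \<le> WD1 P Q"
    unfolding WD1_def by (intro SUP_upper) auto
  then have "ereal L * ereal (((\<integral>z. u z \<partial>Q) - (\<integral>z. u z \<partial>P)) / L) \<le> ereal L * WD1 P Q"
    using L by (intro ereal_mult_left_mono) (auto simp: v_def diff_divide_distrib)
  then have "ereal ((\<integral>z. u z \<partial>Q) - (\<integral>z. u z \<partial>P)) \<le> ereal L * WD1 P Q"
    using L by simp
  then have "ereal (\<integral>z. u z \<partial>P) + ereal ((\<integral>z. u z \<partial>Q) - (\<integral>z. u z \<partial>P))
      \<le> ereal (\<integral>z. u z \<partial>P) + ereal L * WD1 P Q"
    by (rule add_left_mono)
  then show ?thesis by simp
qed

lemma integral_density_le_mult: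
  fixes \<rho>S \<rho>T F :: "'z \<Rightarrow> real" and m :: real
  assumes [measurable]: "\<rho>S \<in> borel_measurable N" "\<rho>T \<in> borel_measurable N" "F \<in> borel_measurable N"
    and "\<And>z. \<rho>S z \<ge> 0" "\<And>z. \<rho>T z \<ge> 0" "\<And>z. F z \<ge> 0" "m \<ge> 0"
    and "\<And>z. \<rho>T z \<le> m * \<rho>S z"
    and "integrable (density N \<rho>S) F" "integrable (density N \<rho>T) F"
  shows "(\<integral>z. F z \<partial>density N \<rho>T) \<le> m * (\<integral>z. F z \<partial>density N \<rho>S)"
proof -
  have "ennreal (\<integral>z. F z \<partial>density N \<rho>T) = (\<integral>\<^sup>+z. ennreal (\<rho>T z) * ennreal (F z) \<partial>N)"
    using assms by (simp add: nn_integral_eq_integral[symmetric] nn_integral_density)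
  also have "\<dots> \<le> (\<integral>\<^sup>+z. ennreal m * (ennreal (\<rho>S z) * ennreal (F z)) \<partial>N)"
  proof (rule nn_integral_mono)
    fix z
    have "\<rho>T z * F z \<le> m * (\<rho>S z * F z)"
      using assms(6,8)[of z] by (metis mult.assoc mult_right_mono)
    then show "ennreal (\<rho>T z) * ennreal (F z) \<le> ennreal m * (ennreal (\<rho>S z) * ennreal (F z))"
      using assms(4-7) by (simp add: ennreal_mult[symmetric] ennreal_leI)
  qed
  also have "\<dots> = ennreal m * (\<integral>\<^sup>+z. ennreal (F z) \<partial>density N \<rho>S)"
    by (simp add: nn_integral_cmult nn_integral_density)
  also have "\<dots> = ennreal (m * (\<integral>z. F z \<partial>density N \<rho>S))"
    using assms by (simp add: nn_integral_eq_integral ennreal_mult)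
  finally show ?thesis
    using assms(6,7) by (simp add: ennreal_le_iff integral_nonneg)
qed

lemma ereal_mult_bound_nonneg:
  fixes M :: ereal
  assumes "s > 0" "t \<ge> 0" "ereal t \<le> M * ereal s"
  shows "M \<ge> 0"
proof (cases M)
  case (real r)
  then have "0 \<le> r * s" using assms(2,3) by simp
  then show ?thesis using assms(1) real by (simp add: zero_le_mult_iff)
qed (use assms in auto)

lemma integral_density_le_ereal_mult:
  fixes \<rho>S \<rho>T F :: "'z \<Rightarrow> real" and M :: ereal
  assumes [measurable]: "\<rho>S \<in> borel_measurable N" "\<rho>T \<in> borel_measurable N" "F \<in> borel_measurable N"
    and \<rho>S_pos: "\<And>z. \<rho>S z > 0" and \<rho>T_nonneg: "\<And>z. \<rho>T z \<ge> 0" and F_nonneg: "\<And>z. F z \<ge> 0"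
    and bound: "\<And>z. ereal (\<rho>T z) \<le> M * ereal (\<rho>S z)"
    and int: "integrable (density N \<rho>S) F" "integrable (density N \<rho>T) F"
  shows "ereal (\<integral>z. F z \<partial>density N \<rho>T) \<le> M * ereal (\<integral>z. F z \<partial>density N \<rho>S)"
proof (cases M)
  case (real m)
  have "m \<ge> 0"
    using ereal_mult_bound_nonneg[OF \<rho>S_pos \<rho>T_nonneg bound] real by simp
  moreover have "\<rho>T z \<le> m * \<rho>S z" for z using bound[of z] real by simp
  ultimately show ?thesis
    using integral_density_le_mult[of \<rho>S N \<rho>T F m] assms real by (simp add: less_imp_le)
next
  case PInf
  show ?thesis
  proof (cases "(\<integral>z. F z \<partial>density N \<rho>S) = 0")
    case True
    then have "AE z in density N \<rho>S. F z = 0"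
      using int(1) F_nonneg by (subst integral_nonneg_eq_0_iff_AE[symmetric]) auto
    then have "AE z in N. F z = 0"
      using \<rho>S_pos by (subst (asm) AE_density) auto
    then have "AE z in density N \<rho>T. F z = 0"
      by (subst AE_density) (auto elim: AE_mp)
    then show ?thesis using True by (simp add: integral_eq_zero_AE zero_ereal_def[symmetric])
  next
    case False
    then show ?thesis using PInf F_nonneg by (simp add: integral_nonneg order_neq_le_trans)
  qed
next
  case MInf
  then show ?thesis using bound[of undefined] \<rho>S_pos[of undefined] by simp
qed

lemma kernel_integral_unit_interval:
  fixes f :: "'a \<Rightarrow> real"
  assumes k: "k \<in> measurable M (subprob_algebra N)" and k_prob: "\<And>z. prob_space (k z)"
    and f: "f \<in> borel_measurable N" and f_unit: "\<And>x. f x \<in> {0..1}"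
  shows "(\<lambda>z. \<integral>x. f x \<partial>k z) \<in> borel_measurable M"
    and "z \<in> space M \<Longrightarrow> (\<integral>x. f x \<partial>k z) \<in> {0..1}"
proof -
  show "(\<lambda>z. \<integral>x. f x \<partial>k z) \<in> borel_measurable M"
    by (rule measurable_compose[OF k integral_measurable_subprob_algebra[OF f]])
  assume "z \<in> space M"
  then have "f \<in> borel_measurable (k z)"
    using f by (subst measurable_cong_sets[OF subprob_measurableD(2)[OF k] refl])
  then show "(\<integral>x. f x \<partial>k z) \<in> {0..1}"
    by (rule integral_unit_interval[OF k_prob _ f_unit])
qed

lemma risk_disintegration:
  fixes p :: "'x::topological_space measure" and g :: "'x \<Rightarrow> 'z::topological_space"
    and f :: "'x \<Rightarrow> real" and \<phi> :: "'z \<Rightarrow> real" and k :: "'z \<Rightarrow> 'x measure"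
  assumes p: "prob_space p" "sets p = sets borel"
    and [measurable]: "g \<in> borel_measurable borel" "f \<in> borel_measurable borel" "\<phi> \<in> borel_measurable borel"
    and k_meas [measurable]: "k \<in> measurable borel (subprob_algebra borel)"
    and f_binary: "\<And>x. f x \<in> {0, 1}" and \<phi>_unit: "\<And>z. \<phi> z \<in> {0..1}"
    and k_prob: "\<And>z. prob_space (k z)"
    and bind: "p = distr p borel g \<bind> k"
    and fiber: "AE z in distr p borel g. AE x in k z. g x = z"
  shows "risk p (\<phi> \<circ> g) f = (\<integral>z. disagreement (\<phi> z) (\<integral>x. f x \<partial>k z) \<partial>distr p borel g)"
proof -
  let ?\<mu> = "distr p borel g"
  have measurable_k: "measurable (k z) N = measurable borel N" for z and N :: "'b measure"
    using subprob_measurableD(2)[OF k_meas] by (intro measurable_cong_sets) simp_all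
  have "g \<in> measurable p borel" by (simp add: measurable_cong_sets[OF p(2) refl])
  then have "finite_measure ?\<mu>"
    using p(1) by (intro prob_space.finite_measure prob_space.prob_space_distr) auto
  moreover have "\<bar>\<bar>\<phi> (g x) - f x\<bar>\<bar> \<le> 1" for x
    using f_binary[of x] \<phi>_unit[of "g x"] by auto
  moreover have "k \<in> measurable ?\<mu> (subprob_algebra borel)"
    by simp
  moreover have "(\<lambda>x. \<bar>\<phi> (g x) - f x\<bar>) \<in> borel_measurable borel"
    by measurable
  ultimately have "risk p (\<phi> \<circ> g) f = (\<integral>z. (\<integral>x. \<bar>\<phi> (g x) - f x\<bar> \<partial>k z) \<partial>?\<mu>)"
    unfolding risk_def comp_def using k_prob
    by (subst bind, intro integral_bind[where K=borel and B=1 and B'=1]) (simp_all add: prob_space.emeasure_space_1)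
  also have "\<dots> = (\<integral>z. disagreement (\<phi> z) (\<integral>x. f x \<partial>k z) \<partial>?\<mu>)"
  proof (rule integral_cong_AE)
    show "AE z in ?\<mu>. (\<integral>x. \<bar>\<phi> (g x) - f x\<bar> \<partial>k z) = disagreement (\<phi> z) (\<integral>x. f x \<partial>k z)"
      using fiber
    proof eventually_elim
      case (elim z)
      have "(\<integral>x. \<bar>\<phi> (g x) - f x\<bar> \<partial>k z) = (\<integral>x. \<bar>\<phi> z - f x\<bar> \<partial>k z)"
        using elim by (intro integral_cong_AE) (auto simp: measurable_k)
      then show ?case
        using integral_abs_diff_binary[OF k_prob _ f_binary \<phi>_unit] by (simp add: measurable_k)
    qed
    have "(\<lambda>z. \<integral>x. h x \<partial>k z) \<in> borel_measurable borel" if "h \<in> borel_measurable borel" for h :: "'x \<Rightarrow> real"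
      by (rule measurable_compose[OF k_meas integral_measurable_subprob_algebra]) (rule that)
    then show "(\<lambda>z. \<integral>x. \<bar>\<phi> (g x) - f x\<bar> \<partial>k z) \<in> borel_measurable ?\<mu>"
      and "(\<lambda>z. disagreement (\<phi> z) (\<integral>x. f x \<partial>k z)) \<in> borel_measurable ?\<mu>"
      unfolding disagreement_def by simp_all
  qed
  finally show ?thesis .
qed

lemma disagreement_risk_transfer:
  fixes P Q :: "'z::metric_space measure" and h h' fS fT :: "'z \<Rightarrow> real"
  assumes P: "prob_space P" "sets P = sets borel" and Q: "prob_space Q" "sets Q = sets borel"
    and measurable: "fS \<in> borel_measurable borel" "fT \<in> borel_measurable borel"
    and lip: "K-lipschitz_on UNIV h" "K-lipschitz_on UNIV h'"
    and unit: "\<And>z. h z \<in> {0..1}" "\<And>z. h' z \<in> {0..1}" "\<And>z. fS z \<in> {0..1}" "\<And>z. fT z \<in> {0..1}"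
  shows "ereal (\<integral>z. disagreement (h z) (fT z) \<partial>Q)
           \<le> ereal (\<integral>z. disagreement (h z) (fS z) \<partial>P) + ereal (2 * K) * WD1 P Q
             + ereal (\<integral>z. disagreement (h' z) (fS z) \<partial>P) + ereal (\<integral>z. disagreement (h' z) (fS z) \<partial>Q)
             + ereal (\<integral>z. \<bar>fT z - fS z\<bar> \<partial>Q)"
proof -
  have measurable_h: "h \<in> borel_measurable borel" "h' \<in> borel_measurable borel"
    using lip by (auto intro: borel_measurable_continuous_onI lipschitz_on_continuous_on)
  have abs_diff_unit: "\<bar>a - b\<bar> \<in> {0..1}" if "a \<in> {0..1}" "b \<in> {0..1}" for a b :: real
    using that by auto
  have measurable_facts:
    "(\<lambda>z. disagreement (h z) (fS z)) \<in> borel_measurable borel"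
    "(\<lambda>z. disagreement (h z) (fT z)) \<in> borel_measurable borel"
    "(\<lambda>z. disagreement (h' z) (fS z)) \<in> borel_measurable borel"
    "(\<lambda>z. \<bar>h z - h' z\<bar>) \<in> borel_measurable borel"
    "(\<lambda>z. \<bar>fT z - fS z\<bar>) \<in> borel_measurable borel"
    using measurable measurable_h by (simp_all add: measurable_disagreement)
  note unit_facts = disagreement_unit_interval[OF unit(1,3)] disagreement_unit_interval[OF unit(1,4)]
    disagreement_unit_interval[OF unit(2,3)] abs_diff_unit[OF unit(1,2)] abs_diff_unit[OF unit(4,3)]
  note integrable_P = integrable_borel_unit_interval[OF P] and integrable_Q = integrable_borel_unit_interval[OF Q]
  note integrable =
    integrable_P[OF measurable_facts(1) unit_facts(1)] integrable_Q[OF measurable_facts(2) unit_facts(2)]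
    integrable_P[OF measurable_facts(3) unit_facts(3)] integrable_Q[OF measurable_facts(3) unit_facts(3)]
    integrable_P[OF measurable_facts(4) unit_facts(4)] integrable_Q[OF measurable_facts(4) unit_facts(4)]
    integrable_Q[OF measurable_facts(5) unit_facts(5)]
  have triangle: "(\<integral>z. disagreement (h z) (fT z) \<partial>Q)
      \<le> (\<integral>z. \<bar>h z - h' z\<bar> \<partial>Q) + ((\<integral>z. disagreement (h' z) (fS z) \<partial>Q) + (\<integral>z. \<bar>fT z - fS z\<bar> \<partial>Q))"
  proof -
    have "(\<integral>z. disagreement (h z) (fT z) \<partial>Q)
        \<le> (\<integral>z. \<bar>h z - h' z\<bar> + disagreement (h' z) (fS z) + \<bar>fT z - fS z\<bar> \<partial>Q)"
      using integrable disagreement_triangle[OF unit(1,3)]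
      by (intro integral_mono Bochner_Integration.integrable_add) auto
    then show ?thesis using integrable by (simp add: Bochner_Integration.integral_add)
  qed
  have "(K + K)-lipschitz_on UNIV (\<lambda>z. \<bar>h z - h' z\<bar>)"
    by (rule lipschitz_on_abs_diff[OF lip])
  then have "(2 * K)-lipschitz_on UNIV (\<lambda>z. \<bar>h z - h' z\<bar>)"
    by (simp only: mult_2)
  then have wasserstein: "ereal (\<integral>z. \<bar>h z - h' z\<bar> \<partial>Q)
      \<le> ereal (\<integral>z. \<bar>h z - h' z\<bar> \<partial>P) + ereal (2 * K) * WD1 P Q"
    by (rule lipschitz_integral_le_WD1[OF P(1) Q(1) _ integrable(5,6)])
  have source: "(\<integral>z. \<bar>h z - h' z\<bar> \<partial>P)
      \<le> (\<integral>z. disagreement (h z) (fS z) \<partial>P) + (\<integral>z. disagreement (h' z) (fS z) \<partial>P)"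
  proof -
    have "\<bar>h z - h' z\<bar> \<le> disagreement (h z) (fS z) + disagreement (h' z) (fS z)" for z
      using abs_diff_le_disagreement[OF unit(1)[of z] unit(3)[of z]]
        abs_diff_le_disagreement[OF unit(2)[of z] unit(3)[of z]]
      by linarith
    then have "(\<integral>z. \<bar>h z - h' z\<bar> \<partial>P)
        \<le> (\<integral>z. disagreement (h z) (fS z) + disagreement (h' z) (fS z) \<partial>P)"
      by (intro integral_mono integrable(5) Bochner_Integration.integrable_add integrable(1,3))
    then show ?thesis using integrable by (simp add: Bochner_Integration.integral_add)
  qed
  have "ereal (\<integral>z. disagreement (h z) (fT z) \<partial>Q)
      \<le> ereal (\<integral>z. \<bar>h z - h' z\<bar> \<partial>Q)
        + ereal ((\<integral>z. disagreement (h' z) (fS z) \<partial>Q) + (\<integral>z. \<bar>fT z - fS z\<bar> \<partial>Q))"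
    using triangle by simp
  also have "\<dots> \<le> ereal ((\<integral>z. disagreement (h z) (fS z) \<partial>P) + (\<integral>z. disagreement (h' z) (fS z) \<partial>P))
        + ereal (2 * K) * WD1 P Q
        + ereal ((\<integral>z. disagreement (h' z) (fS z) \<partial>Q) + (\<integral>z. \<bar>fT z - fS z\<bar> \<partial>Q))"
    using wasserstein source by (intro add_mono order_trans[OF wasserstein]) auto
  finally show ?thesis by (simp only: plus_ereal.simps(1)[symmetric] ac_simps)
qed

lemma latent_risk_transfer:
  fixes N :: "'z::metric_space measure" and \<rho>S \<rho>T h h' fS fT :: "'z \<Rightarrow> real" and M :: ereal
  assumes sets_N: "sets N = sets borel"
    and prob: "prob_space (density N \<rho>S)" "prob_space (density N \<rho>T)"
    and measurable: "\<rho>S \<in> borel_measurable borel" "\<rho>T \<in> borel_measurable borel"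
      "fS \<in> borel_measurable borel" "fT \<in> borel_measurable borel"
    and \<rho>S_pos: "\<And>z. \<rho>S z > 0" and \<rho>T_nonneg: "\<And>z. \<rho>T z \<ge> 0"
    and density_bound: "\<And>z. ereal (\<rho>T z) \<le> M * ereal (\<rho>S z)"
    and lip: "K-lipschitz_on UNIV h" "K-lipschitz_on UNIV h'"
    and unit: "\<And>z. h z \<in> {0..1}" "\<And>z. h' z \<in> {0..1}" "\<And>z. fS z \<in> {0..1}" "\<And>z. fT z \<in> {0..1}"
  shows "ereal (\<integral>z. disagreement (h z) (fT z) \<partial>density N \<rho>T)
           \<le> ereal (\<integral>z. disagreement (h z) (fS z) \<partial>density N \<rho>S)
             + ereal (2 * K) * WD1 (density N \<rho>S) (density N \<rho>T)
             + (1 + M) * ereal (\<integral>z. disagreement (h' z) (fS z) \<partial>density N \<rho>S)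
             + ereal (\<integral>z. \<bar>fT z - fS z\<bar> \<partial>density N \<rho>T)"
proof -
  let ?\<mu>S = "density N \<rho>S" and ?\<mu>T = "density N \<rho>T"
  let ?b = "\<lambda>\<mu>. \<integral>z. disagreement (h' z) (fS z) \<partial>\<mu>"
  have measurable_N: "measurable N X = measurable borel X" for X :: "'b measure"
    using measurable_cong_sets[OF sets_N refl] .
  have measurable_h': "h' \<in> borel_measurable borel"
    using lip by (auto intro: borel_measurable_continuous_onI lipschitz_on_continuous_on)
  then have measurable_b: "(\<lambda>z. disagreement (h' z) (fS z)) \<in> borel_measurable borel"
    using measurable by (simp add: measurable_disagreement)
  have unit_b: "disagreement (h' z) (fS z) \<in> {0..1}" for z
    by (rule disagreement_unit_interval[OF unit(2,3)])
  have shift: "ereal (?b ?\<mu>T) \<le> M * ereal (?b ?\<mu>S)"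
    using \<rho>S_pos \<rho>T_nonneg density_bound unit_b measurable measurable_b
      integrable_borel_unit_interval[OF prob(1) _ measurable_b unit_b]
      integrable_borel_unit_interval[OF prob(2) _ measurable_b unit_b] sets_N
    by (intro integral_density_le_ereal_mult) (simp_all add: measurable_N)
  have distrib: "(1 + M) * ereal (?b ?\<mu>S) = ereal (?b ?\<mu>S) + M * ereal (?b ?\<mu>S)"
    using ereal_mult_bound_nonneg[OF \<rho>S_pos \<rho>T_nonneg density_bound] unit_b
    by (simp add: ereal_left_distrib integral_nonneg)
  have "ereal (\<integral>z. disagreement (h z) (fT z) \<partial>?\<mu>T)
      \<le> ereal (\<integral>z. disagreement (h z) (fS z) \<partial>?\<mu>S) + ereal (2 * K) * WD1 ?\<mu>S ?\<mu>T
        + ereal (?b ?\<mu>S) + ereal (?b ?\<mu>T) + ereal (\<integral>z. \<bar>fT z - fS z\<bar> \<partial>?\<mu>T)"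
    using sets_N by (intro disagreement_risk_transfer prob measurable(3,4) lip unit) simp_all
  also have "\<dots> \<le> ereal (\<integral>z. disagreement (h z) (fS z) \<partial>?\<mu>S) + ereal (2 * K) * WD1 ?\<mu>S ?\<mu>T
        + ereal (?b ?\<mu>S) + M * ereal (?b ?\<mu>S) + ereal (\<integral>z. \<bar>fT z - fS z\<bar> \<partial>?\<mu>T)"
    using shift by (intro add_mono) auto
  finally show ?thesis
    unfolding distrib by (simp only: ac_simps)
qed

theorem theorem1:
  fixes pS pT :: "'x::topological_space measure"
    and g :: "'x \<Rightarrow> real^'d"
    and f :: "'x \<Rightarrow> real"
    and H :: "(real^'d \<Rightarrow> real) set"
    and K :: real
    and piS piT :: "nat \<Rightarrow> real"
    and qS qT :: "nat \<Rightarrow> real^'d \<Rightarrow> real"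
    and kS kT :: "real^'d \<Rightarrow> 'x measure"
    and hstar h :: "real^'d \<Rightarrow> real"
  assumes probS: "prob_space pS" and setsS: "sets pS = sets borel"
    and probT: "prob_space pT" and setsT: "sets pT = sets borel"
    and g_cont: "continuous_on UNIV g"
    and f_meas: "f \<in> borel_measurable borel"
    and f_bin: "\<And>x. f x \<in> {0, 1}"
    and H_range: "\<And>h' z. h' \<in> H \<Longrightarrow> h' z \<in> {0..1}"
    and H_lip: "\<And>h'. h' \<in> H \<Longrightarrow> K-lipschitz_on UNIV h'"
    and piS_pos: "\<And>k. k \<in> {0, 1} \<Longrightarrow> piS k > 0"
    and piT_nonneg: "\<And>k. k \<in> {0, 1} \<Longrightarrow> piT k \<ge> 0"
    and piS_sum: "piS 0 + piS 1 = 1"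
    and piT_sum: "piT 0 + piT 1 = 1"
    \<comment> \<open>class-conditional densities on the latent space (w.r.t. Lebesgue measure)\<close>
    and qS_cont: "\<And>k. k \<in> {0, 1} \<Longrightarrow> continuous_on UNIV (qS k)"
    and qT_cont: "\<And>k. k \<in> {0, 1} \<Longrightarrow> continuous_on UNIV (qT k)"
    and qS_pos: "\<And>k z. k \<in> {0, 1} \<Longrightarrow> qS k z > 0"
    and qT_nonneg: "\<And>k z. k \<in> {0, 1} \<Longrightarrow> qT k z \<ge> 0"
    and qS_prob: "\<And>k. k \<in> {0, 1} \<Longrightarrow> (\<integral>\<^sup>+ z. ennreal (qS k z) \<partial>lborel) = 1"
    and qT_prob: "\<And>k. k \<in> {0, 1} \<Longrightarrow> (\<integral>\<^sup>+ z. ennreal (qT k z) \<partial>lborel) = 1"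
    and decS: "distr pS borel g = density lborel (\<lambda>z. \<Sum>k\<in>{0, 1}. piS k * qS k z)"
    and decT: "distr pT borel g = density lborel (\<lambda>z. \<Sum>k\<in>{0, 1}. piT k * qT k z)"
    \<comment> \<open>conditional distributions g_U(. | z): disintegration of p_U along g\<close>
    and kS_meas: "kS \<in> measurable borel (subprob_algebra borel)"
    and kT_meas: "kT \<in> measurable borel (subprob_algebra borel)"
    and kS_prob: "\<And>z. prob_space (kS z)"
    and kT_prob: "\<And>z. prob_space (kT z)"
    and kS_bind: "pS = distr pS borel g \<bind> kS"
    and kT_bind: "pT = distr pT borel g \<bind> kT"
    and kS_fiber: "AE z in distr pS borel g. AE x in kS z. g x = z"
    and kT_fiber: "AE z in distr pT borel g. AE x in kT z. g x = z"
    and hstar_in: "hstar \<in> H"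
    and hstar_min: "\<And>h'. h' \<in> H \<Longrightarrow> risk pS (h' \<circ> g) f \<ge> risk pS (hstar \<circ> g) f"
    and h_in: "h \<in> H"
  shows "ereal (risk pT (h \<circ> g) f)
           \<le> ereal (risk pS (h \<circ> g) f)
             + ereal (2 * K) * WD1 (distr pS borel g) (distr pT borel g)
             + (1 + (SUP kz \<in> {0, 1} \<times> UNIV.
                       ereal ((piT (fst kz) / piS (fst kz)) * (qT (fst kz) (snd kz) / qS (fst kz) (snd kz)))))
               * ereal (risk pS (hstar \<circ> g) f)
             + ereal (risk (distr pT borel g) (\<lambda>z. \<integral>x. f x \<partial>kT z) (\<lambda>z. \<integral>x. f x \<partial>kS z))"
proof -
  let ?\<mu>S = "distr pS borel g" and ?\<mu>T = "distr pT borel g"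
  let ?fS = "\<lambda>z. \<integral>x. f x \<partial>kS z" and ?fT = "\<lambda>z. \<integral>x. f x \<partial>kT z"
  let ?\<rho>S = "\<lambda>z. \<Sum>k\<in>{0, 1}. piS k * qS k z" and ?\<rho>T = "\<lambda>z. \<Sum>k\<in>{0, 1}. piT k * qT k z"
  have f_unit: "f x \<in> {0..1}" for x using f_bin[of x] by auto
  note fS = kernel_integral_unit_interval[OF kS_meas kS_prob f_meas f_unit]
  note fT = kernel_integral_unit_interval[OF kT_meas kT_prob f_meas f_unit]
  have g_meas: "g \<in> borel_measurable borel" using g_cont by (rule borel_measurable_continuous_onI)
  have H_meas: "h' \<in> borel_measurable borel" if "h' \<in> H" for h'
    using H_lip[OF that] by (intro borel_measurable_continuous_onI lipschitz_on_continuous_on)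
  have risk_S: "risk pS (h' \<circ> g) f = (\<integral>z. disagreement (h' z) (?fS z) \<partial>?\<mu>S)" if "h' \<in> H" for h'
    using H_range[OF that] by (intro risk_disintegration probS setsS g_meas f_meas H_meas[OF that]
      kS_meas f_bin kS_prob kS_bind kS_fiber)
  have risk_T: "risk pT (h \<circ> g) f = (\<integral>z. disagreement (h z) (?fT z) \<partial>?\<mu>T)"
    using H_range[OF h_in] by (intro risk_disintegration probT setsT g_meas f_meas H_meas[OF h_in]
      kT_meas f_bin kT_prob kT_bind kT_fiber)
  have density_bound: "ereal (?\<rho>T z) \<le> (SUP kz \<in> {0, 1} \<times> UNIV.
      ereal ((piT (fst kz) / piS (fst kz)) * (qT (fst kz) (snd kz) / qS (fst kz) (snd kz)))) * ereal (?\<rho>S z)" for z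
    by (rule mixture_le_SUP_ratio_mult) (simp_all add: piS_pos qS_pos)
  have "?\<rho>S \<in> borel_measurable borel" "?\<rho>T \<in> borel_measurable borel"
    using qS_cont qT_cont by (auto intro!: borel_measurable_continuous_onI continuous_intros)
  moreover have "prob_space (density lborel ?\<rho>S)" "prob_space (density lborel ?\<rho>T)"
    using prob_space.prob_space_distr[OF probS, of g borel] prob_space.prob_space_distr[OF probT, of g borel]
    unfolding decS[symmetric] decT[symmetric]
    by (simp_all add: g_meas measurable_cong_sets[OF setsS refl] measurable_cong_sets[OF setsT refl])
  moreover have "?\<rho>S z > 0" "?\<rho>T z \<ge> 0" for z
    using piS_pos qS_pos piT_nonneg qT_nonneg by (auto intro!: add_pos_pos add_nonneg_nonneg)
  moreover have "?fS z \<in> {0..1}" "?fT z \<in> {0..1}" for z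
    using fS(2) fT(2) by simp_all
  ultimately have "ereal (\<integral>z. disagreement (h z) (?fT z) \<partial>?\<mu>T)
      \<le> ereal (\<integral>z. disagreement (h z) (?fS z) \<partial>?\<mu>S) + ereal (2 * K) * WD1 ?\<mu>S ?\<mu>T
        + (1 + (SUP kz \<in> {0, 1} \<times> UNIV.
            ereal ((piT (fst kz) / piS (fst kz)) * (qT (fst kz) (snd kz) / qS (fst kz) (snd kz)))))
          * ereal (\<integral>z. disagreement (hstar z) (?fS z) \<partial>?\<mu>S)
        + ereal (\<integral>z. \<bar>?fT z - ?fS z\<bar> \<partial>?\<mu>T)"
    unfolding decS decT
    by (intro latent_risk_transfer[where N=lborel] sets_lborel fS(1) fT(1) density_bound
        H_lip[OF h_in] H_lip[OF hstar_in] H_range[OF h_in] H_range[OF hstar_in])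
  then show ?thesis
    unfolding risk_S[OF h_in] risk_S[OF hstar_in] risk_T by (simp add: risk_def)
qed

end
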